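(* Let $d\ge 2$, $R_0>0$, and let $U:(0,\infty)\to\mathbb{R}$ be a measurable radial kernel profile such that $\int_{R_0}^{\infty}|U(r)|\,r^{d-2}\,e^{-r^2/\delta^2}\,dr<\infty$ for some $\delta>0$. For $\varepsilon>0$ let $U^{\varepsilon}(r)=U(r)\,\operatorname{Erf}(r/\varepsilon)$. Then for every $\varepsilon_{\rm tol}>0$ there exists $\varepsilon_0>0$ such that $$\int_{R_0}^{\infty}|(U-U^{\varepsilon})(r)|\,r^{d-1}\,dr\le\varepsilon_{\rm tol}\qquad\text{for all }0<\varepsilon<\varepsilon_0 .$$
   Context: $\operatorname{Erf}(x)=\frac{2}{\sqrt\pi}\int_0^x e^{-t^2}\,dt$ is the error function. *)

theory Defs
  imports "HOL-Analysis.Analysis"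
begin

definition Erf :: "real \<Rightarrow> real" where
  "Erf x = 2 / sqrt pi * (LBINT t=0..x. exp (- (t^2)))"

end

theory Submission
  imports Defs "HOL-Probability.Distributions" "HOL-Real_Asymp.Real_Asymp"
begin

text \<open>
  For \<open>x \<ge> 0\<close> the Gaussian tail gives \<open>0 \<le> 1 - Erf x \<le> exp (-x\<^sup>2)\<close>. Splitting
  \<open>exp (-(r/\<epsilon>)\<^sup>2) = exp (-r\<^sup>2/\<delta>\<^sup>2) * exp (-a r\<^sup>2)\<close> with \<open>a = 1/\<epsilon>\<^sup>2 - 1/\<delta>\<^sup>2\<close> and using
  \<open>r exp (-a r\<^sup>2) \<le> 1 / sqrt a\<close> to absorb the extra power of \<open>r\<close>, the error integral is at most
  \<open>M / sqrt a\<close>, where \<open>M\<close> is the finite weighted integral of \<open>\<bar>U\<bar>\<close> in the hypothesis.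
  This tends to \<open>0\<close> as \<open>\<epsilon> \<rightarrow> 0\<close>.
\<close>

lemma integrable_gaussian_nonneg_half:
  "integrable lborel (\<lambda>t::real. indicator {0..} t * exp (- t\<^sup>2))"
  using gaussian_moment_0 by (auto intro: integrable.intros)

lemma integral_gaussian_nonneg_half:
  "(\<integral>t. indicator {0..} t * exp (- t\<^sup>2) \<partial>lborel) = sqrt pi / 2"
  using gaussian_moment_0 by (simp add: has_bochner_integral_integral_eq)

lemma Erf_eq_one_minus_gaussian_tail:
  fixes x :: real
  assumes "0 \<le> x"
  shows "Erf x = 1 - 2 / sqrt pi * (\<integral>t. indicator {x<..} t * exp (- t\<^sup>2) \<partial>lborel)"
proof -
  have integrable_Icc: "integrable lborel (\<lambda>t. indicator {0..x} t * exp (- t\<^sup>2))"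
    by (rule Bochner_Integration.integrable_bound[OF integrable_gaussian_nonneg_half])
       (auto simp: indicator_def)
  have "(LBINT t=0..x. exp (- t\<^sup>2)) = (\<integral>t. indicator {0..x} t * exp (- t\<^sup>2) \<partial>lborel)"
    using interval_integral_Icc[of 0 x "\<lambda>t. exp (- t\<^sup>2)"] assms
    by (simp add: set_lebesgue_integral_def zero_ereal_def)
  also have "\<dots> = (\<integral>t. indicator {0..} t * exp (- t\<^sup>2) \<partial>lborel)
                  - (\<integral>t. indicator {x<..} t * exp (- t\<^sup>2) \<partial>lborel)"
  proof -
    have "(\<integral>t. indicator {0..} t * exp (- t\<^sup>2) \<partial>lborel)
        = (\<integral>t. indicator {0..x} t * exp (- t\<^sup>2) + indicator {x<..} t * exp (- t\<^sup>2) \<partial>lborel)"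
      by (rule Bochner_Integration.integral_cong) (use assms in \<open>auto simp: indicator_def\<close>)
    also have "\<dots> = (\<integral>t. indicator {0..x} t * exp (- t\<^sup>2) \<partial>lborel)
                    + (\<integral>t. indicator {x<..} t * exp (- t\<^sup>2) \<partial>lborel)"
    proof (rule Bochner_Integration.integral_add[OF integrable_Icc])
      show "integrable lborel (\<lambda>t. indicator {x<..} t * exp (- t\<^sup>2))"
        by (rule Bochner_Integration.integrable_bound[OF integrable_gaussian_nonneg_half])
           (use assms in \<open>auto simp: indicator_def\<close>)
    qed
    finally show ?thesis by simp
  qed
  finally show ?thesis
    unfolding Erf_def integral_gaussian_nonneg_half by (simp add: right_diff_distrib)
qed

lemma gaussian_tail_nonneg:
  "0 \<le> (\<integral>t. indicator {x<..} t * exp (- t\<^sup>2) \<partial>lborel :: real)"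
  by (rule Bochner_Integration.integral_nonneg) simp

lemma gaussian_tail_le:
  fixes x :: real
  assumes "0 \<le> x"
  shows "(\<integral>t. indicator {x<..} t * exp (- t\<^sup>2) \<partial>lborel) \<le> exp (- x\<^sup>2) * (sqrt pi / 2)"
proof -
  have "(\<integral>t. indicator {x<..} t * exp (- t\<^sup>2) \<partial>lborel)
      = (\<integral>s. indicator {x<..} (x + s) * exp (- (x + s)\<^sup>2) \<partial>lborel)"
    using lborel_integral_real_affine[of 1 "\<lambda>t. indicator {x<..} t * exp (- t\<^sup>2)" x] by simp
  also have "\<dots> \<le> (\<integral>s. exp (- x\<^sup>2) * (indicator {0..} s * exp (- s\<^sup>2)) \<partial>lborel)"
  proof (rule integral_mono')
    show "integrable lborel (\<lambda>s. exp (- x\<^sup>2) * (indicator {0..} s * exp (- s\<^sup>2)))"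
      using integrable_gaussian_nonneg_half by simp
  next
    fix s :: real
    show "0 \<le> exp (- x\<^sup>2) * (indicator {0..} s * exp (- s\<^sup>2))"
      by simp
    \<comment> \<open>\<open>(x + s)\<^sup>2 \<ge> x\<^sup>2 + s\<^sup>2\<close> for \<open>x, s \<ge> 0\<close>\<close>
    show "indicator {x<..} (x + s) * exp (- (x + s)\<^sup>2) \<le> exp (- x\<^sup>2) * (indicator {0..} s * exp (- s\<^sup>2))"
      using assms by (auto simp: indicator_def power2_eq_square algebra_simps simp flip: exp_add)
  qed
  also have "\<dots> = exp (- x\<^sup>2) * (sqrt pi / 2)"
    by (simp add: integral_gaussian_nonneg_half)
  finally show ?thesis .
qed

lemma Erf_le_1: "0 \<le> x \<Longrightarrow> Erf x \<le> 1"
  using gaussian_tail_nonneg[of x] by (simp add: Erf_eq_one_minus_gaussian_tail)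

lemma one_minus_Erf_le_exp:
  fixes x :: real
  assumes "0 \<le> x"
  shows "1 - Erf x \<le> exp (- x\<^sup>2)"
proof -
  have "1 - Erf x = 2 / sqrt pi * (\<integral>t. indicator {x<..} t * exp (- t\<^sup>2) \<partial>lborel)"
    using assms by (simp add: Erf_eq_one_minus_gaussian_tail)
  also have "\<dots> \<le> 2 / sqrt pi * (exp (- x\<^sup>2) * (sqrt pi / 2))"
    using gaussian_tail_le[OF assms] by (rule mult_left_mono) simp
  also have "\<dots> = exp (- x\<^sup>2)"
    by simp
  finally show ?thesis .
qed

lemma mult_exp_neg_square_le_1:
  fixes y :: real
  shows "y * exp (- y\<^sup>2) \<le> 1"
proof -
  have "y \<le> 1 + y\<^sup>2"
    using zero_le_power2[of "y - 1/2"] by (simp add: power2_eq_square algebra_simps)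
  also have "\<dots> \<le> exp (y\<^sup>2)"
    by (rule exp_ge_add_one_self)
  finally show ?thesis
    by (simp add: exp_minus field_simps)
qed

lemma mult_exp_neg_scaled_square_le:
  fixes a r :: real
  assumes "0 < a"
  shows "r * exp (- (a * r\<^sup>2)) \<le> 1 / sqrt a"
proof -
  have "sqrt a * r * exp (- (sqrt a * r)\<^sup>2) \<le> 1"
    by (rule mult_exp_neg_square_le_1)
  then show ?thesis
    using assms by (simp add: power_mult_distrib field_simps)
qed

lemma inverse_square_diff_pos:
  fixes \<epsilon> \<delta> :: real
  shows "0 < \<epsilon> \<Longrightarrow> \<epsilon> < \<delta> \<Longrightarrow> 0 < 1 / \<epsilon>\<^sup>2 - 1 / \<delta>\<^sup>2"
  by (simp add: field_simps power_strict_mono)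

lemma mult_one_minus_Erf_le:
  fixes r \<epsilon> \<delta> :: real
  assumes "0 \<le> r" and "0 < \<epsilon>" and "\<epsilon> < \<delta>"
  shows "r * (1 - Erf (r / \<epsilon>)) \<le> exp (- r\<^sup>2 / \<delta>\<^sup>2) / sqrt (1 / \<epsilon>\<^sup>2 - 1 / \<delta>\<^sup>2)"
proof -
  define a where "a = 1 / \<epsilon>\<^sup>2 - 1 / \<delta>\<^sup>2"
  have "0 < a"
    unfolding a_def using assms(2,3) by (rule inverse_square_diff_pos)
  have "r * (1 - Erf (r / \<epsilon>)) \<le> r * exp (- (r / \<epsilon>)\<^sup>2)"
    using assms by (intro mult_left_mono one_minus_Erf_le_exp) auto
  also have "\<dots> = exp (- r\<^sup>2 / \<delta>\<^sup>2) * (r * exp (- (a * r\<^sup>2)))"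
    using assms by (simp add: a_def power_divide field_simps flip: exp_add)
  also have "\<dots> \<le> exp (- r\<^sup>2 / \<delta>\<^sup>2) * (1 / sqrt a)"
    using \<open>0 < a\<close> by (intro mult_left_mono mult_exp_neg_scaled_square_le) auto
  finally show ?thesis
    by (simp add: a_def)
qed

lemma Erf_truncation_error_le:
  fixes d :: nat and u r \<epsilon> \<delta> :: real
  assumes "d \<ge> 2" and "0 \<le> r" and "0 < \<epsilon>" and "\<epsilon> < \<delta>"
  shows "\<bar>u - u * Erf (r / \<epsilon>)\<bar> * r ^ (d - 1)
    \<le> \<bar>u\<bar> * r ^ (d - 2) * exp (- r\<^sup>2 / \<delta>\<^sup>2) / sqrt (1 / \<epsilon>\<^sup>2 - 1 / \<delta>\<^sup>2)"
proof -
  have "d - 1 = Suc (d - 2)"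
    using assms(1) by simp
  then have "r ^ (d - 1) = r * r ^ (d - 2)"
    by simp
  moreover have "u - u * Erf (r / \<epsilon>) = u * (1 - Erf (r / \<epsilon>))"
    by (simp add: algebra_simps)
  ultimately have "\<bar>u - u * Erf (r / \<epsilon>)\<bar> * r ^ (d - 1) = \<bar>u\<bar> * r ^ (d - 2) * (r * (1 - Erf (r / \<epsilon>)))"
    using Erf_le_1[of "r / \<epsilon>"] assms(2,3) by (simp add: abs_mult mult_ac)
  also have "\<dots> \<le> \<bar>u\<bar> * r ^ (d - 2) * (exp (- r\<^sup>2 / \<delta>\<^sup>2) / sqrt (1 / \<epsilon>\<^sup>2 - 1 / \<delta>\<^sup>2))"
    using assms(2-4) by (intro mult_left_mono mult_one_minus_Erf_le) auto
  finally show ?thesis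
    by simp
qed

lemma nn_integral_Erf_truncation_error_le:
  fixes d :: nat and R0 \<delta> \<epsilon> M :: real and U :: "real \<Rightarrow> real"
  assumes "d \<ge> 2" and "R0 > 0"
    and U: "U \<in> borel_measurable (restrict_space lborel {0<..})"
    and "0 < \<epsilon>" and "\<epsilon> < \<delta>"
    and M: "(\<integral>\<^sup>+ r\<in>{R0..}. ennreal (\<bar>U r\<bar> * r ^ (d - 2) * exp (- r\<^sup>2 / \<delta>\<^sup>2)) \<partial>lborel) = ennreal M"
    and "M \<ge> 0"
  shows "(\<integral>\<^sup>+ r\<in>{R0..}. ennreal (\<bar>U r - U r * Erf (r / \<epsilon>)\<bar> * r ^ (d - 1)) \<partial>lborel)
    \<le> ennreal (M / sqrt (1 / \<epsilon>\<^sup>2 - 1 / \<delta>\<^sup>2))"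
proof -
  define c where "c = 1 / sqrt (1 / \<epsilon>\<^sup>2 - 1 / \<delta>\<^sup>2)"
  have "0 < c"
    using inverse_square_diff_pos[OF assms(4,5)] by (simp add: c_def)
  define F where "F r = ennreal (\<bar>U r\<bar> * r ^ (d - 2) * exp (- r\<^sup>2 / \<delta>\<^sup>2)) * indicator {R0..} r" for r
  \<comment> \<open>\<open>U\<close> is only measurable on \<open>{0<..}\<close>, which contains \<open>{R0..}\<close>.\<close>
  have "(\<lambda>r. indicator {0<..} r * U r) \<in> borel_measurable lborel"
    using U by (simp add: borel_measurable_restrict_space_iff)
  then have "(\<lambda>r. ennreal (\<bar>indicator {0<..} r * U r\<bar> * r ^ (d - 2) * exp (- r\<^sup>2 / \<delta>\<^sup>2))
                  * indicator {R0..} r) \<in> borel_measurable lborel"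
    by measurable
  also have "(\<lambda>r. ennreal (\<bar>indicator {0<..} r * U r\<bar> * r ^ (d - 2) * exp (- r\<^sup>2 / \<delta>\<^sup>2))
                  * indicator {R0..} r) = F"
    using \<open>R0 > 0\<close> by (auto simp: F_def indicator_def)
  finally have F_measurable: "F \<in> borel_measurable lborel" .
  have "(\<integral>\<^sup>+ r\<in>{R0..}. ennreal (\<bar>U r - U r * Erf (r / \<epsilon>)\<bar> * r ^ (d - 1)) \<partial>lborel)
      \<le> (\<integral>\<^sup>+ r. ennreal c * F r \<partial>lborel)"
  proof (intro nn_integral_mono)
    fix r :: real
    show "ennreal (\<bar>U r - U r * Erf (r / \<epsilon>)\<bar> * r ^ (d - 1)) * indicator {R0..} r \<le> ennreal c * F r"
    proof (cases "R0 \<le> r")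
      case True
      then have "\<bar>U r - U r * Erf (r / \<epsilon>)\<bar> * r ^ (d - 1)
          \<le> c * (\<bar>U r\<bar> * r ^ (d - 2) * exp (- r\<^sup>2 / \<delta>\<^sup>2))"
        using Erf_truncation_error_le[of d r \<epsilon> \<delta> "U r"] assms(1,2,4,5) by (simp add: c_def)
      then show ?thesis
        using True \<open>0 < c\<close> \<open>R0 > 0\<close> by (simp add: F_def ennreal_leI flip: ennreal_mult)
    qed (simp add: F_def)
  qed
  also have "\<dots> = ennreal c * integral\<^sup>N lborel F"
    by (rule nn_integral_cmult[OF F_measurable])
  also have "\<dots> = ennreal c * ennreal M"
    using M by (simp add: F_def[abs_def])
  also have "\<dots> = ennreal (M / sqrt (1 / \<epsilon>\<^sup>2 - 1 / \<delta>\<^sup>2))"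
    using \<open>0 < c\<close> \<open>M \<ge> 0\<close> by (simp add: c_def flip: ennreal_mult)
  finally show ?thesis .
qed

theorem theorem4p1:
  fixes d :: nat and R0 \<delta> :: real and U :: "real \<Rightarrow> real"
  assumes "d \<ge> 2" and "R0 > 0"
    and "U \<in> borel_measurable (restrict_space lborel {0<..})"
    and "\<delta> > 0"
    and "(\<integral>\<^sup>+ r\<in>{R0..}. ennreal (\<bar>U r\<bar> * r ^ (d - 2) * exp (- (r^2) / \<delta>^2)) \<partial>lborel) < \<infinity>"
  shows "\<forall>tol>0. \<exists>\<epsilon>0>0. \<forall>\<epsilon>. 0 < \<epsilon> \<and> \<epsilon> < \<epsilon>0 \<longrightarrow>
           (\<integral>\<^sup>+ r\<in>{R0..}. ennreal (\<bar>U r - U r * Erf (r / \<epsilon>)\<bar> * r ^ (d - 1)) \<partial>lborel)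
             \<le> ennreal tol"
proof (intro allI impI)
  fix tol :: real
  assume "tol > 0"
  obtain M where "M \<ge> 0"
    and M: "(\<integral>\<^sup>+ r\<in>{R0..}. ennreal (\<bar>U r\<bar> * r ^ (d - 2) * exp (- (r^2) / \<delta>^2)) \<partial>lborel) = ennreal M"
    using assms(5) by (cases rule: ennreal_cases) auto
  have "((\<lambda>\<epsilon>. 1 / sqrt (1 / \<epsilon>\<^sup>2 - 1 / \<delta>\<^sup>2)) \<longlongrightarrow> 0) (at_right 0)"
    by real_asymp
  from tendsto_mult_right_zero[OF this, of M]
  have "\<forall>\<^sub>F \<epsilon> in at_right 0. M / sqrt (1 / \<epsilon>\<^sup>2 - 1 / \<delta>\<^sup>2) < tol"
    using \<open>tol > 0\<close> by (simp add: order_tendstoD(2))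
  moreover have "\<forall>\<^sub>F \<epsilon> in at_right 0. \<epsilon> < \<delta>"
    using \<open>\<delta> > 0\<close> eventually_at_right_field by blast
  ultimately have "\<forall>\<^sub>F \<epsilon> in at_right 0. M / sqrt (1 / \<epsilon>\<^sup>2 - 1 / \<delta>\<^sup>2) < tol \<and> \<epsilon> < \<delta>"
    by (rule eventually_conj)
  then obtain \<epsilon>0 where "\<epsilon>0 > 0"
    and \<epsilon>0: "\<And>\<epsilon>. 0 < \<epsilon> \<Longrightarrow> \<epsilon> < \<epsilon>0 \<Longrightarrow> M / sqrt (1 / \<epsilon>\<^sup>2 - 1 / \<delta>\<^sup>2) < tol \<and> \<epsilon> < \<delta>"
    by (auto simp: eventually_at_right_field)
  show "\<exists>\<epsilon>0>0. \<forall>\<epsilon>. 0 < \<epsilon> \<and> \<epsilon> < \<epsilon>0 \<longrightarrow>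
           (\<integral>\<^sup>+ r\<in>{R0..}. ennreal (\<bar>U r - U r * Erf (r / \<epsilon>)\<bar> * r ^ (d - 1)) \<partial>lborel)
             \<le> ennreal tol"
    using \<open>\<epsilon>0 > 0\<close> \<epsilon>0 nn_integral_Erf_truncation_error_le[OF assms(1-3) _ _ M \<open>M \<ge> 0\<close>]
    by (meson ennreal_leI less_imp_le order_trans)
qed

end
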